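(* Let $f:\mathbb{R}^N\to\mathbb{R}$ be differentiable, let $w^t\in\Delta^N$ have all entries positive, and suppose $M_t:=\max_i(\Pi^t\nabla f^t)_i>0$; set $\eta_{t,\max}=1/M_t$. Let $\eta_t=\gamma_t\eta_{t,\max}$ with $\gamma_t\in(0,1)$, and let $$w^{t+1}=w^t-\eta_t\,w^t\odot\Pi^t\nabla f^t.$$ Then for any $u\in\Delta^N$, $$D(u\,|\,w^{t+1})-D(u\,|\,w^t)\le\eta_t\,u\cdot(\Pi^t\nabla f^t)+C_{\gamma_t}\eta_t^2\,u\cdot(\Pi^t\nabla f^t)^2,$$ where $C_{\gamma}=\gamma^{-2}\log\!\big(e^{-\gamma}/(1-\gamma)\big)$.
   Context: $\Delta^N=\{w\in\mathbb{R}^N : \sum_i w_i=1,\ w_i\ge 0\}$. Write $\nabla f^t=\nabla f(w^t)$ and $(\Pi^t\nabla f^t)_i=\nabla_i f(w^t)-w^t\cdot\nabla f(w^t)$. $\odot$ denotes componentwise multiplication; $(\Pi^t\nabla f^t)^2$ is the componentwise square. The relative entropy is $D(u\,|\,w)=\sum_{i:\,u_i\ne0}u_i\log(u_i/w_i)$. *)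

theory Defs
  imports "HOL-Analysis.Analysis"
begin

definition prob_simplex :: "(real^'n) set" where
  "prob_simplex = {w. (\<Sum>i\<in>UNIV. w $ i) = 1 \<and> (\<forall>i. 0 \<le> w $ i)}"

definition grad :: "(real^'n \<Rightarrow> real) \<Rightarrow> real^'n \<Rightarrow> real^'n" where
  "grad f w = (THE g. (f has_derivative (\<lambda>h. g \<bullet> h)) (at w))"

definition proj_grad :: "(real^'n \<Rightarrow> real) \<Rightarrow> real^'n \<Rightarrow> real^'n" where
  "proj_grad f w = (\<chi> i. grad f w $ i - w \<bullet> grad f w)"

definition rel_entropy :: "real^'n \<Rightarrow> real^'n \<Rightarrow> real" where
  "rel_entropy u w = (\<Sum>i\<in>{i. u $ i \<noteq> 0}. u $ i * ln (u $ i / w $ i))"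

definition C_gamma :: "real \<Rightarrow> real" where
  "C_gamma \<gamma> = ln (exp (- \<gamma>) / (1 - \<gamma>)) / \<gamma>\<^sup>2"

end

theory Submission
  imports Defs
begin

text \<open>The update is multiplicative, \<open>w'\<^sub>i = w\<^sub>i (1 - x\<^sub>i)\<close> with \<open>x\<^sub>i = \<eta> (\<Pi>\<nabla>f)\<^sub>i \<le> \<gamma>\<close>,
  so the change of relative entropy is exactly \<open>\<Sum>\<^sub>i u\<^sub>i (- ln (1 - x\<^sub>i))\<close>. The ratio
  \<open>(- ln (1 - x) - x) / x\<^sup>2\<close> is nondecreasing on \<open>(0, 1)\<close>, at least \<open>1/2\<close> there, and equals
  \<open>C_gamma \<gamma>\<close> at \<open>\<gamma>\<close>; for \<open>x \<le> 0\<close> the remainder \<open>- ln (1 - x) - x\<close> is at most \<open>x\<^sup>2/2\<close>.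
  Hence \<open>- ln (1 - x) \<le> x + C_gamma \<gamma> x\<^sup>2\<close> for every \<open>x \<le> \<gamma>\<close>, and summing against \<open>u\<close> gives
  the bound.\<close>

lemma C_gamma_eq:
  assumes "\<gamma> < 1"
  shows "C_gamma \<gamma> = (- ln (1 - \<gamma>) - \<gamma>) / \<gamma>\<^sup>2"
  using assms by (simp add: C_gamma_def ln_div)

lemma ln_one_minus_remainder_ge_half_sq:
  fixes x :: real
  assumes "0 \<le> x" "x < 1"
  shows "x\<^sup>2 / 2 \<le> - ln (1 - x) - x"
proof -
  have "(\<lambda>y. - ln (1 - y) - y - y\<^sup>2 / 2) 0 \<le> (\<lambda>y. - ln (1 - y) - y - y\<^sup>2 / 2) x"
  proof (rule DERIV_nonneg_imp_nondecreasing[OF assms(1)])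
    fix t :: real
    assume t: "0 \<le> t" "t \<le> x"
    then have "t < 1" using assms by simp
    then have "((\<lambda>y. - ln (1 - y) - y - y\<^sup>2 / 2) has_real_derivative t\<^sup>2 / (1 - t)) (at t)"
      by (auto intro!: derivative_eq_intros simp: field_simps power2_eq_square)
    then show "\<exists>d. ((\<lambda>y. - ln (1 - y) - y - y\<^sup>2 / 2) has_real_derivative d) (at t) \<and> d \<ge> 0"
      using \<open>t < 1\<close> by auto
  qed
  then show ?thesis by simp
qed

lemma ln_one_minus_remainder_le_half_sq:
  fixes x :: real
  assumes "x \<le> 0"
  shows "- ln (1 - x) - x \<le> x\<^sup>2 / 2"
proof -
  have "(\<lambda>y. ln (1 + y) - y + y\<^sup>2 / 2) 0 \<le> (\<lambda>y. ln (1 + y) - y + y\<^sup>2 / 2) (- x)"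
  proof (rule DERIV_nonneg_imp_nondecreasing[of 0 "- x"])
    show "0 \<le> - x" using assms by simp
  next
    fix t :: real
    assume t: "0 \<le> t" "t \<le> - x"
    then have "((\<lambda>y. ln (1 + y) - y + y\<^sup>2 / 2) has_real_derivative t\<^sup>2 / (1 + t)) (at t)"
      by (auto intro!: derivative_eq_intros simp: field_simps power2_eq_square)
    then show "\<exists>d. ((\<lambda>y. ln (1 + y) - y + y\<^sup>2 / 2) has_real_derivative d) (at t) \<and> d \<ge> 0"
      using t by auto
  qed
  then show ?thesis by simp
qed

text \<open>The numerator of the derivative of \<open>(- ln (1 - x) - x) / x\<^sup>2\<close>, up to the factor \<open>x\<^sup>3\<close>.\<close>

lemma sq_div_one_minus_plus_ln_one_minus_nonneg:
  fixes x :: real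
  assumes "0 \<le> x" "x < 1"
  shows "0 \<le> x\<^sup>2 / (1 - x) + 2 * x + 2 * ln (1 - x)"
proof -
  have "(\<lambda>y. y\<^sup>2 / (1 - y) + 2 * y + 2 * ln (1 - y)) 0
          \<le> (\<lambda>y. y\<^sup>2 / (1 - y) + 2 * y + 2 * ln (1 - y)) x"
  proof (rule DERIV_nonneg_imp_nondecreasing[OF assms(1)])
    fix t :: real
    assume t: "0 \<le> t" "t \<le> x"
    then have t1: "t < 1" using assms by simp
    have "((\<lambda>y. y\<^sup>2 / (1 - y) + 2 * y + 2 * ln (1 - y)) has_real_derivative
            (2 * t * (1 - t) + t\<^sup>2) / (1 - t)\<^sup>2 + 2 - 2 / (1 - t)) (at t)"
      using t1 by (auto intro!: derivative_eq_intros simp: power2_eq_square field_simps)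
    moreover have "(2 * t * (1 - t) + t\<^sup>2) / (1 - t)\<^sup>2 + 2 - 2 / (1 - t) = t\<^sup>2 / (1 - t)\<^sup>2"
      using t1 by (simp add: divide_simps power2_eq_square) (simp add: algebra_simps)
    ultimately show "\<exists>d. ((\<lambda>y. y\<^sup>2 / (1 - y) + 2 * y + 2 * ln (1 - y)) has_real_derivative d) (at t)
                         \<and> d \<ge> 0"
      by auto
  qed
  then show ?thesis by simp
qed

lemma ln_one_minus_remainder_ratio_mono:
  fixes x y :: real
  assumes "0 < x" "x \<le> y" "y < 1"
  shows "(- ln (1 - x) - x) / x\<^sup>2 \<le> (- ln (1 - y) - y) / y\<^sup>2"
proof -
  have "(\<lambda>t. (- ln (1 - t) - t) / t\<^sup>2) x \<le> (\<lambda>t. (- ln (1 - t) - t) / t\<^sup>2) y"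
  proof (rule DERIV_nonneg_imp_nondecreasing[OF assms(2)])
    fix t :: real
    assume "x \<le> t" "t \<le> y"
    then have t: "0 < t" "t < 1" using assms by auto
    have "((\<lambda>t. (- ln (1 - t) - t) / t\<^sup>2) has_real_derivative
            ((1 / (1 - t) - 1) * t\<^sup>2 - (- ln (1 - t) - t) * (2 * t)) / (t\<^sup>2)\<^sup>2) (at t)"
      using t by (auto intro!: derivative_eq_intros simp: power2_eq_square)
    moreover have "((1 / (1 - t) - 1) * t\<^sup>2 - (- ln (1 - t) - t) * (2 * t)) / (t\<^sup>2)\<^sup>2
                     = (t\<^sup>2 / (1 - t) + 2 * t + 2 * ln (1 - t)) / t ^ 3"
      using t by (simp add: field_simps power2_eq_square power3_eq_cube)
    moreover have "0 \<le> (t\<^sup>2 / (1 - t) + 2 * t + 2 * ln (1 - t)) / t ^ 3"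
      using sq_div_one_minus_plus_ln_one_minus_nonneg[of t] t by simp
    ultimately show "\<exists>d. ((\<lambda>t. (- ln (1 - t) - t) / t\<^sup>2) has_real_derivative d) (at t) \<and> d \<ge> 0"
      by auto
  qed
  then show ?thesis by simp
qed

lemma neg_ln_one_minus_le_C_gamma:
  fixes x \<gamma> :: real
  assumes "x \<le> \<gamma>" "0 < \<gamma>" "\<gamma> < 1"
  shows "- ln (1 - x) \<le> x + C_gamma \<gamma> * x\<^sup>2"
proof (cases "0 < x")
  case True
  have "(- ln (1 - x) - x) / x\<^sup>2 \<le> C_gamma \<gamma>"
    using ln_one_minus_remainder_ratio_mono[of x \<gamma>] assms True by (simp add: C_gamma_eq)
  then have "(- ln (1 - x) - x) / x\<^sup>2 * x\<^sup>2 \<le> C_gamma \<gamma> * x\<^sup>2"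
    by (rule mult_right_mono) simp
  then show ?thesis using True by simp
next
  case False
  have "1 / 2 \<le> C_gamma \<gamma>"
    using ln_one_minus_remainder_ge_half_sq[of \<gamma>] assms by (simp add: C_gamma_eq field_simps)
  then have "x\<^sup>2 / 2 \<le> C_gamma \<gamma> * x\<^sup>2"
    using mult_right_mono[of "1 / 2" "C_gamma \<gamma>" "x\<^sup>2"] by simp
  then show ?thesis
    using ln_one_minus_remainder_le_half_sq[of x] False by linarith
qed

lemma rel_entropy_mult:
  fixes u w :: "real^'n" and c :: "'n \<Rightarrow> real"
  assumes "\<forall>i. 0 \<le> u $ i" "\<forall>i. 0 < w $ i" "\<forall>i. 0 < c i"
  shows "rel_entropy u (\<chi> i. w $ i * c i) = rel_entropy u w - (\<Sum>i\<in>UNIV. u $ i * ln (c i))"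
proof -
  have "u $ i * ln (u $ i / (w $ i * c i)) = u $ i * ln (u $ i / w $ i) - u $ i * ln (c i)"
    if "u $ i \<noteq> 0" for i
  proof -
    have "0 < u $ i" using assms(1) that by (simp add: order_less_le)
    moreover have "0 < w $ i" "0 < c i" using assms(2,3) by auto
    ultimately show ?thesis by (simp add: ln_div ln_mult algebra_simps)
  qed
  then have "rel_entropy u (\<chi> i. w $ i * c i)
               = rel_entropy u w - (\<Sum>i\<in>{i. u $ i \<noteq> 0}. u $ i * ln (c i))"
    unfolding rel_entropy_def sum_subtractf[symmetric] by (intro sum.cong) auto
  also have "(\<Sum>i\<in>{i. u $ i \<noteq> 0}. u $ i * ln (c i)) = (\<Sum>i\<in>UNIV. u $ i * ln (c i))"
    by (rule sum.mono_neutral_left) auto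
  finally show ?thesis .
qed

theorem theoremA1:
  fixes f :: "real^'n \<Rightarrow> real" and w u :: "real^'n" and \<gamma> M \<eta> :: real and w' :: "real^'n"
  assumes diff: "\<And>x. f differentiable (at x)"
    and w_simplex: "w \<in> prob_simplex"
    and w_pos: "\<forall>i. 0 < w $ i"
    and M_def: "M = Max (range (\<lambda>i. proj_grad f w $ i))"
    and M_pos: "M > 0"
    and gamma: "0 < \<gamma>" "\<gamma> < 1"
    and u_simplex: "u \<in> prob_simplex"
    and eta_def: "\<eta> = \<gamma> * (1 / M)"
    and w'_def: "w' = w - \<eta> *\<^sub>R (\<chi> i. w $ i * proj_grad f w $ i)"
  shows "rel_entropy u w' - rel_entropy u w
           \<le> \<eta> * (u \<bullet> proj_grad f w)
             + C_gamma \<gamma> * \<eta>\<^sup>2 * (u \<bullet> (\<chi> i. (proj_grad f w $ i)\<^sup>2))"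
proof -
  define g where "g = proj_grad f w"
  have u_nonneg: "\<forall>i. 0 \<le> u $ i" using u_simplex by (simp add: prob_simplex_def)
  have step_le: "\<eta> * g $ i \<le> \<gamma>" for i
  proof -
    have "g $ i \<le> M" unfolding M_def g_def by (rule Max_ge) auto
    then have "\<eta> * g $ i \<le> \<eta> * M" using eta_def gamma M_pos by (intro mult_left_mono) auto
    then show ?thesis using eta_def M_pos by simp
  qed
  have "w' = (\<chi> i. w $ i * (1 - \<eta> * g $ i))"
    unfolding w'_def g_def by (simp add: vec_eq_iff algebra_simps)
  moreover have "\<forall>i. 0 < 1 - \<eta> * g $ i" using step_le gamma(2) by (meson diff_gt_0_iff_gt le_less_trans)
  ultimately have "rel_entropy u w' - rel_entropy u w = (\<Sum>i\<in>UNIV. u $ i * - ln (1 - \<eta> * g $ i))"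
    using rel_entropy_mult[OF u_nonneg w_pos] by (simp add: sum_negf)
  also have "\<dots> \<le> (\<Sum>i\<in>UNIV. u $ i * (\<eta> * g $ i + C_gamma \<gamma> * (\<eta> * g $ i)\<^sup>2))"
    using neg_ln_one_minus_le_C_gamma[OF step_le gamma] u_nonneg
    by (intro sum_mono mult_left_mono) auto
  also have "\<dots> = \<eta> * (u \<bullet> g) + C_gamma \<gamma> * \<eta>\<^sup>2 * (u \<bullet> (\<chi> i. (g $ i)\<^sup>2))"
    by (simp add: inner_vec_def sum.distrib sum_distrib_left algebra_simps power2_eq_square)
  finally show ?thesis unfolding g_def .
qed

end
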